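(* Let $\mathcal{G}=(V,E)$ be a $k$-regular connected hypergraph with $n$ vertices, and let $\theta$ be the second largest eigenvalue of $A_{\mathcal{G}}$ in absolute value (i.e. $\theta=\max_{l\ge2}|\lambda_l|$ where $\lambda_1\ge\dots\ge\lambda_n$ are the eigenvalues of $A_{\mathcal{G}}$). Then $$\operatorname{diam}(\mathcal{G})\le\left\lfloor 1+\frac{\log(n-1)}{\log(k/\theta)}\right\rfloor.$$
   Context: A hypergraph $\mathcal{G}=(V,E)$ has a finite vertex set $V$ and a set $E$ of subsets of $V$ (edges), each of cardinality at least $2$. The degree $d_i$ of a vertex $i$ is the number of edges containing $i$; $\mathcal{G}$ is $k$-regular if $d_i=k$ for all $i$. The adjacency matrix $A_{\mathcal{G}}$ has $(A_{\mathcal{G}})_{ij}=\sum_{e\in E,\, i,j\in e}\frac{1}{|e|-1}$ for $i\ne j$ and zero diagonal. A path of length $l$ between $v_0$ and $v_l$ is an alternating sequence $v_0e_1v_1\dots e_lv_l$ of distinct vertices and distinct edges with $v_{i-1},v_i\in e_i$; the distance $d(i,j)$ is the minimum length of an $i$–$j$ path, $\operatorname{diam}(\mathcal{G})=\max_{i,j}d(i,j)$; connected means every two vertices are joined by a path. *)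

theory Defs
  imports "HOL-Analysis.Analysis"
begin

text \<open>Hypergraphs on a finite vertex type 'n (vertex set V = UNIV), edge set E.\<close>

definition hypergraph :: "'n::finite set set \<Rightarrow> bool" where
  "hypergraph E \<longleftrightarrow> (\<forall>e\<in>E. card e \<ge> 2)"

definition hdegree :: "'n::finite set set \<Rightarrow> 'n \<Rightarrow> nat" where
  "hdegree E i = card {e\<in>E. i \<in> e}"

definition hregular :: "'n::finite set set \<Rightarrow> nat \<Rightarrow> bool" where
  "hregular E k \<longleftrightarrow> (\<forall>i. hdegree E i = k)"

definition hadj :: "'n::finite set set \<Rightarrow> real^'n^'n" where
  "hadj E = (\<chi> i j. if i = j then 0
      else (\<Sum>e\<in>{e\<in>E. i \<in> e \<and> j \<in> e}. 1 / (real (card e) - 1)))"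

definition hpath :: "'n::finite set set \<Rightarrow> 'n list \<Rightarrow> 'n set list \<Rightarrow> bool" where
  "hpath E vs es \<longleftrightarrow> length vs = length es + 1 \<and> distinct vs \<and> distinct es \<and>
     set es \<subseteq> E \<and> (\<forall>i < length es. vs ! i \<in> es ! i \<and> vs ! (i+1) \<in> es ! i)"

definition hpath_between :: "'n::finite set set \<Rightarrow> 'n \<Rightarrow> 'n \<Rightarrow> nat \<Rightarrow> bool" where
  "hpath_between E u v l \<longleftrightarrow>
     (\<exists>vs es. hpath E vs es \<and> hd vs = u \<and> last vs = v \<and> length es = l)"

definition hconnected :: "'n::finite set set \<Rightarrow> bool" where
  "hconnected E \<longleftrightarrow> (\<forall>u v. \<exists>l. hpath_between E u v l)"

definition hdist :: "'n::finite set set \<Rightarrow> 'n \<Rightarrow> 'n \<Rightarrow> nat" where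
  "hdist E u v = (LEAST l. hpath_between E u v l)"

definition hdiam :: "'n::finite set set \<Rightarrow> nat" where
  "hdiam E = Max {hdist E u v | u v. True}"

definition eigenvalues_desc :: "real^'n::finite^'n \<Rightarrow> real list \<Rightarrow> bool" where
  "eigenvalues_desc A lam \<longleftrightarrow> length lam = CARD('n) \<and> sorted_wrt (\<ge>) lam \<and>
     (\<forall>x. det (x *\<^sub>R mat 1 - A) = (\<Prod>i<CARD('n). (x - lam ! i)))"

end

theory Submission
  imports Defs
begin

text \<open>The adjacency matrix A is symmetric with A 1 = k 1, and by a maximum principle on the
  connected hypergraph every k-eigenvector is constant. Hence all eigenvalues of A on the
  orthogonal complement of 1 are bounded by \<theta> in absolute value, and so is the operator norm
  of A there. Writing e_j = (1/n) 1 + P_j with P_j orthogonal to 1, the (i,j) entry of A^m is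
  k^m/n + <P_i, A^m P_j> \<ge> k^m/n - \<theta>^m (1 - 1/n), which is positive as soon as
  k^m > \<theta>^m (n - 1), i.e. for m = \<lfloor>1 + log(n - 1) / log(k/\<theta>)\<rfloor>. A positive entry of A^m
  comes from a walk of length m, which contains a path of length at most m.\<close>

section \<open>Symmetric and nonnegative matrices\<close>

lemma symmetric_matrix_inner:
  fixes B :: "real^'n^'n"
  assumes "transpose B = B"
  shows "(B *v x) \<bullet> y = x \<bullet> (B *v y)"
  by (metis assms dot_lmul_matrix vector_transpose_matrix)

lemma rayleigh_maximizer_eigenvector:
  fixes C :: "real^'n^'n"
  assumes sym: "transpose C = C"
  obtains x0 where "norm x0 = 1" "C *v x0 = (x0 \<bullet> (C *v x0)) *\<^sub>R x0"
    "\<And>x. x \<bullet> (C *v x) \<le> (x0 \<bullet> (C *v x0)) * (x \<bullet> x)"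
proof -
  let ?R = "\<lambda>x. x \<bullet> (C *v x)"
  have "sphere (0::real^'n) 1 \<noteq> {}"
    using norm_axis_1[of undefined] by (metis mem_sphere_0 empty_iff)
  then obtain x0 where x0: "norm x0 = 1" and x0_max: "\<And>y. norm y = 1 \<Longrightarrow> ?R y \<le> ?R x0"
  proof -
    have "continuous_on (sphere 0 1) ?R" by (intro continuous_intros)
    with continuous_attains_sup[OF compact_sphere \<open>sphere 0 1 \<noteq> {}\<close>] that show ?thesis
      by fastforce
  qed
  define M where "M = ?R x0"
  have bound: "?R x \<le> M * (x \<bullet> x)" for x
  proof (cases "x = 0")
    case False
    have "?R (inverse (norm x) *\<^sub>R x) \<le> M"
      unfolding M_def using False by (intro x0_max) simp
    then show ?thesis
      using False
      by (simp add: matrix_vector_mult_scaleR field_simps power2_eq_square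
          flip: power2_norm_eq_inner)
  qed simp
  define Q where "Q x = M * (x \<bullet> x) - ?R x" for x
  have Q_nonneg: "Q x \<ge> 0" for x
    using bound[of x] unfolding Q_def by simp
  have x0_unit: "x0 \<bullet> x0 = 1" and x0_M: "x0 \<bullet> (C *v x0) = M"
    using x0 unfolding M_def by (simp_all flip: power2_norm_eq_inner)
  define w where "w = M *\<^sub>R x0 - C *v x0"
  \<comment> \<open>Q is a nonnegative quadratic form vanishing at x0, so its gradient 2w at x0 must vanish.\<close>
  have Q_line: "Q (x0 + t *\<^sub>R w) = 2 * t * (w \<bullet> w) + t^2 * Q w" for t
    using x0_unit x0_M symmetric_matrix_inner[OF sym, of x0 w]
    unfolding Q_def w_def
    by (simp add: matrix_vector_right_distrib matrix_vector_mult_scaleR matrix_vector_mult_diff_distrib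
        inner_add_left inner_add_right inner_diff_left inner_diff_right power2_eq_square
        inner_commute algebra_simps)
  have "w = 0"
  proof (rule ccontr)
    assume "w \<noteq> 0"
    then have ww: "w \<bullet> w > 0" by simp
    define t where "t = - (w \<bullet> w) / (Q w + 1)"
    have "Q w \<ge> 0" by (rule Q_nonneg)
    then have "t < 0" and "t * Q w \<ge> - (w \<bullet> w)"
      using ww unfolding t_def by (auto simp: field_simps)
    have "0 \<le> Q (x0 + t *\<^sub>R w)" by (rule Q_nonneg)
    also have "\<dots> = t * (2 * (w \<bullet> w) + t * Q w)"
      unfolding Q_line by (simp add: algebra_simps power2_eq_square)
    also have "\<dots> < 0"
      using \<open>t < 0\<close> \<open>t * Q w \<ge> - (w \<bullet> w)\<close> ww by (intro mult_neg_pos) linarith+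
    finally show False by simp
  qed
  then show ?thesis
    using that x0 bound unfolding w_def M_def by simp
qed

lemma eigenvector_from_square:
  fixes B :: "real^'n^'n"
  assumes "B *v (B *v x) = (s * s) *\<^sub>R x" and "x \<noteq> 0"
  obtains v t where "v \<noteq> 0" "B *v v = t *\<^sub>R v" "\<bar>t\<bar> = \<bar>s\<bar>"
proof (cases "B *v x + s *\<^sub>R x = 0")
  case True
  then have "B *v x = (- s) *\<^sub>R x"
    by (simp add: eq_neg_iff_add_eq_0)
  then show ?thesis
    using that[of x "- s"] \<open>x \<noteq> 0\<close> by simp
next
  case False
  have "B *v (B *v x + s *\<^sub>R x) = s *\<^sub>R (B *v x + s *\<^sub>R x)"
    using assms(1) by (simp add: matrix_vector_right_distrib matrix_vector_mult_scaleR scaleR_add_right)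
  then show ?thesis
    using that[of _ s] False by simp
qed

lemma symmetric_matrix_norm_le:
  fixes B :: "real^'n^'n"
  assumes sym: "transpose B = B" and "\<rho> \<ge> 0"
    and eigenvalue_bound: "\<And>t v. v \<noteq> 0 \<Longrightarrow> B *v v = t *\<^sub>R v \<Longrightarrow> \<bar>t\<bar> \<le> \<rho>"
  shows "norm (B *v z) \<le> \<rho> * norm z"
proof -
  have BB_inner: "x \<bullet> ((B ** B) *v x) = (B *v x) \<bullet> (B *v x)" for x
    by (simp add: symmetric_matrix_inner[OF sym] flip: matrix_vector_mul_assoc)
  have BB_sym: "transpose (B ** B) = B ** B"
    by (simp add: matrix_transpose_mul sym)
  obtain x0 where x0: "norm x0 = 1" and
    eigen: "(B ** B) *v x0 = (x0 \<bullet> ((B ** B) *v x0)) *\<^sub>R x0" and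
    max: "\<And>x. x \<bullet> ((B ** B) *v x) \<le> (x0 \<bullet> ((B ** B) *v x0)) * (x \<bullet> x)"
    by (rule rayleigh_maximizer_eigenvector[OF BB_sym]) blast
  define s where "s = norm (B *v x0)"
  have "B *v (B *v x0) = (s * s) *\<^sub>R x0"
    using eigen unfolding s_def BB_inner
    by (simp add: matrix_vector_mul_assoc power2_eq_square flip: power2_norm_eq_inner)
  then obtain v t where "v \<noteq> 0" "B *v v = t *\<^sub>R v" "\<bar>t\<bar> = \<bar>s\<bar>"
    using x0 by (auto elim: eigenvector_from_square)
  then have "s \<le> \<rho>"
    using eigenvalue_bound s_def by force
  have "(norm (B *v z))^2 = z \<bullet> ((B ** B) *v z)"
    by (simp add: BB_inner power2_norm_eq_inner)
  also have "\<dots> \<le> (s * norm z)^2"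
    using max[of z] by (simp add: BB_inner s_def power_mult_distrib power2_norm_eq_inner)
  also have "\<dots> \<le> (\<rho> * norm z)^2"
    using \<open>s \<le> \<rho>\<close> s_def by (intro power_mono mult_right_mono) auto
  finally show ?thesis
    by (rule power2_le_imp_le) (simp add: \<open>\<rho> \<ge> 0\<close>)
qed

lemma eigenvalue_in_eigenvalues_desc:
  fixes A :: "real^'n^'n"
  assumes "eigenvalues_desc A lam" and "A *v v = s *\<^sub>R v" and "v \<noteq> 0"
  obtains l where "l < CARD('n)" "lam ! l = s"
proof -
  have "(s *\<^sub>R mat 1 - A) *v v = 0"
    using assms(2) by (simp add: matrix_vector_mult_diff_rdistrib flip: scaleR_matrix_vector_assoc)
  then have "\<not> invertible (s *\<^sub>R mat 1 - A)"
    using assms(3) by (metis invertible_def matrix_vector_mul_assoc matrix_vector_mul_lid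
        matrix_vector_mult_0_right)
  then have "(\<Prod>i<CARD('n). s - lam ! i) = 0"
    using assms(1) unfolding eigenvalues_desc_def by (simp add: invertible_det_nz)
  then show ?thesis
    using that by auto
qed

lemma linear_funpow:
  fixes f :: "'a::real_vector \<Rightarrow> 'a"
  shows "linear f \<Longrightarrow> linear (f ^^ m)"
  by (induction m) (simp_all add: real_vector.linear_id linear_compose)

lemma inner_one_one: "(1 :: real^'n) \<bullet> 1 = CARD('n)"
  by (simp add: inner_vec_def)

lemma inner_one_axis: "(1 :: real^'n) \<bullet> axis l 1 = 1"
  by (simp add: inner_axis)

lemma symmetric_matrix_inner_one:
  fixes A :: "real^'n^'n"
  assumes "transpose A = A" and "A *v 1 = r *\<^sub>R 1"
  shows "1 \<bullet> (A *v v) = r * (1 \<bullet> v)"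
  using assms by (simp flip: symmetric_matrix_inner)

text \<open>On the orthogonal complement of the constant vector, A agrees with the symmetric matrix
  B = A - (r/n) J, which kills the constant vector; hence B's spectral norm bound applies.\<close>

lemma symmetric_matrix_norm_le_orthogonal_one:
  fixes A :: "real^'n^'n"
  assumes sym: "transpose A = A" and row: "A *v 1 = r *\<^sub>R 1" and "\<theta> \<ge> 0"
    and eigenvalue_bound:
      "\<And>s v. v \<noteq> 0 \<Longrightarrow> 1 \<bullet> v = 0 \<Longrightarrow> A *v v = s *\<^sub>R v \<Longrightarrow> \<bar>s\<bar> \<le> \<theta>"
    and "1 \<bullet> p = 0"
  shows "norm (A *v p) \<le> \<theta> * norm p"
proof -
  define B where "B = (\<chi> i j. A $ i $ j - r / CARD('n))"
  have B_mult: "B *v v = A *v v - (r / CARD('n) * (1 \<bullet> v)) *\<^sub>R 1" for v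
    unfolding B_def
    by (simp add: vec_eq_iff matrix_vector_mult_def inner_vec_def left_diff_distrib
        sum_subtractf sum_distrib_left)
  have "transpose B = B"
    using sym unfolding B_def by (simp add: transpose_def vec_eq_iff)
  moreover have "\<bar>t\<bar> \<le> \<theta>" if "v \<noteq> 0" "B *v v = t *\<^sub>R v" for t v
  proof -
    have "t * (1 \<bullet> v) = 1 \<bullet> (B *v v)"
      using that(2) by simp
    also have "\<dots> = 0"
      unfolding B_mult
      by (simp add: inner_diff_right symmetric_matrix_inner_one[OF sym row] inner_one_one)
    finally consider "t = 0" | "1 \<bullet> v = 0"
      by auto
    then show ?thesis
    proof cases
      case 2
      then have "A *v v = t *\<^sub>R v"
        using that(2) by (simp add: B_mult)
      then show ?thesis
        using eigenvalue_bound that(1) 2 by blast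
    qed (simp add: \<open>\<theta> \<ge> 0\<close>)
  qed
  ultimately have "norm (B *v p) \<le> \<theta> * norm p"
    using \<open>\<theta> \<ge> 0\<close> by (intro symmetric_matrix_norm_le)
  then show ?thesis
    using \<open>1 \<bullet> p = 0\<close> by (simp add: B_mult)
qed

lemma symmetric_matrix_power_norm_le_orthogonal_one:
  fixes A :: "real^'n^'n"
  assumes sym: "transpose A = A" and row: "A *v 1 = r *\<^sub>R 1" and "\<theta> \<ge> 0"
    and eigenvalue_bound:
      "\<And>s v. v \<noteq> 0 \<Longrightarrow> 1 \<bullet> v = 0 \<Longrightarrow> A *v v = s *\<^sub>R v \<Longrightarrow> \<bar>s\<bar> \<le> \<theta>"
    and "1 \<bullet> p = 0"
  shows "1 \<bullet> (((*v) A ^^ m) p) = 0 \<and> norm (((*v) A ^^ m) p) \<le> \<theta> ^ m * norm p"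
proof (induction m)
  case 0
  then show ?case
    using \<open>1 \<bullet> p = 0\<close> by simp
next
  case (Suc m)
  let ?q = "((*v) A ^^ m) p"
  have "norm (A *v ?q) \<le> \<theta> * norm ?q"
    using Suc.IH
    by (intro symmetric_matrix_norm_le_orthogonal_one[OF sym row \<open>\<theta> \<ge> 0\<close> eigenvalue_bound]) auto
  also have "\<dots> \<le> \<theta> * (\<theta> ^ m * norm p)"
    using Suc.IH \<open>\<theta> \<ge> 0\<close> by (simp add: mult_left_mono)
  finally show ?case
    using Suc.IH symmetric_matrix_inner_one[OF sym row, of ?q] by simp
qed

lemma symmetric_matrix_power_axis_pos:
  fixes A :: "real^'n^'n"
  assumes sym: "transpose A = A" and row: "A *v 1 = r *\<^sub>R 1" and "\<theta> \<ge> 0"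
    and eigenvalue_bound:
      "\<And>s v. v \<noteq> 0 \<Longrightarrow> 1 \<bullet> v = 0 \<Longrightarrow> A *v v = s *\<^sub>R v \<Longrightarrow> \<bar>s\<bar> \<le> \<theta>"
    and gap: "\<theta> ^ m * (real CARD('n) - 1) < r ^ m"
  shows "(((*v) A ^^ m) (axis j 1)) $ i > 0"
proof -
  define n where "n = real CARD('n)"
  have "n \<ge> 1" and "n > 0"
    unfolding n_def by simp_all
  define P where "P l = axis l 1 - (1 / n) *\<^sub>R (1 :: real^'n)" for l
  have P_orth: "1 \<bullet> P l = 0" for l
    unfolding P_def using \<open>n > 0\<close> by (simp add: inner_diff_right inner_one_one inner_one_axis n_def)
  have P_norm: "norm (P l) = sqrt (1 - 1 / n)" for l
    unfolding norm_eq_sqrt_inner P_def using \<open>n > 0\<close>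
    by (simp add: inner_diff_left inner_diff_right inner_one_one inner_one_axis n_def inner_commute
        inner_axis_axis power2_eq_square field_simps)
  define q where "q = ((*v) A ^^ m) (P j)"
  have q_orth: "1 \<bullet> q = 0" and q_norm: "norm q \<le> \<theta> ^ m * norm (P j)"
    using symmetric_matrix_power_norm_le_orthogonal_one[OF assms(1-4) P_orth] unfolding q_def by auto
  have "((*v) A ^^ m) 1 = r ^ m *\<^sub>R (1 :: real^'n)"
    by (induction m) (simp_all add: row matrix_vector_mult_scaleR)
  then have decomp: "((*v) A ^^ m) (axis j 1) = (r ^ m / n) *\<^sub>R 1 + q"
    using linear_funpow[of "(*v) A" m] unfolding q_def P_def
    by (simp add: linear_diff linear_cmul)
  have "\<bar>q $ i\<bar> = \<bar>P i \<bullet> q\<bar>"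
    unfolding P_def using q_orth by (simp add: inner_diff_left inner_axis')
  also have "\<dots> \<le> norm (P i) * norm q"
    by (rule Cauchy_Schwarz_ineq2)
  also have "\<dots> \<le> norm (P i) * (\<theta> ^ m * norm (P j))"
    using q_norm by (simp add: mult_left_mono)
  also have "\<dots> = \<theta> ^ m * (n - 1) / n"
    using \<open>n \<ge> 1\<close> by (simp add: P_norm field_simps)
  also have "\<dots> < r ^ m / n"
    using gap \<open>n > 0\<close> unfolding n_def by (simp add: divide_strict_right_mono)
  finally show ?thesis
    unfolding decomp by simp
qed

lemma eigenvector_max_propagates:
  fixes A :: "real^'n^'n"
  assumes nonneg: "\<And>i j. A $ i $ j \<ge> 0" and row: "A *v 1 = r *\<^sub>R 1"
    and eigen: "A *v v = r *\<^sub>R v" and max: "\<And>l. v $ l \<le> v $ a" and "A $ a $ b > 0"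
  shows "v $ b = v $ a"
proof -
  have "(\<Sum>l\<in>UNIV. A $ a $ l * (v $ a - v $ l)) = (A *v (v $ a *\<^sub>R 1 - v)) $ a"
    by (simp add: matrix_vector_mult_def algebra_simps)
  also have "\<dots> = 0"
    by (simp add: matrix_vector_mult_diff_distrib matrix_vector_mult_scaleR row eigen)
  finally have "A $ a $ l * (v $ a - v $ l) = 0" for l
    using nonneg max by (subst (asm) sum_nonneg_eq_0_iff) (auto simp: mult_nonneg_nonneg)
  then show ?thesis
    using \<open>A $ a $ b > 0\<close> by (metis eq_iff_diff_eq_0 mult_eq_0_iff less_irrefl)
qed

lemma nonneg_matrix_power_nonneg:
  fixes A :: "real^'n^'n"
  assumes "\<And>i j. A $ i $ j \<ge> 0" and "\<And>i. x $ i \<ge> 0"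
  shows "(((*v) A ^^ m) x) $ i \<ge> 0"
  using assms by (induction m arbitrary: i) (auto simp: matrix_vector_mult_def intro!: sum_nonneg)

section \<open>The adjacency matrix of a hypergraph\<close>

lemma hadj_transpose: "transpose (hadj E) = hadj E"
  unfolding hadj_def transpose_def by (auto simp: vec_eq_iff intro!: sum.cong)

lemma hadj_nonneg:
  assumes "hypergraph E"
  shows "hadj E $ i $ j \<ge> 0"
  using assms unfolding hadj_def hypergraph_def by (force intro!: sum_nonneg)

lemma hadj_pos_iff:
  assumes "hypergraph E"
  shows "hadj E $ i $ j > 0 \<longleftrightarrow> i \<noteq> j \<and> (\<exists>e\<in>E. i \<in> e \<and> j \<in> e)"
proof -
  have pos: "1 / (real (card e) - 1) > 0" if "e \<in> E" for e
    using assms that unfolding hypergraph_def by force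
  have "(\<Sum>e\<in>{e\<in>E. i \<in> e \<and> j \<in> e}. 1 / (real (card e) - 1)) > 0
      \<longleftrightarrow> {e\<in>E. i \<in> e \<and> j \<in> e} \<noteq> {}"
  proof
    show "{e\<in>E. i \<in> e \<and> j \<in> e} \<noteq> {}"
      if "(\<Sum>e\<in>{e\<in>E. i \<in> e \<and> j \<in> e}. 1 / (real (card e) - 1)) > 0"
      using that by (metis less_irrefl sum.empty)
  qed (use pos in \<open>auto intro: sum_pos\<close>)
  then show ?thesis
    unfolding hadj_def by auto
qed

lemma hadj_mult_one:
  assumes "hypergraph E" and "hregular E k"
  shows "hadj E *v 1 = real k *\<^sub>R 1"
proof -
  let ?c = "\<lambda>e::'a set. 1 / (real (card e) - 1)"
  have entry: "hadj E $ i $ j = (\<Sum>e | e \<in> E \<and> i \<in> e. if j \<in> e - {i} then ?c e else 0)" for i j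
    unfolding hadj_def by (auto simp: sum.inter_filter[symmetric] intro!: sum.cong)
  have "(\<Sum>j\<in>UNIV. hadj E $ i $ j) = real k" for i
  proof -
    have "(\<Sum>j\<in>UNIV. hadj E $ i $ j)
        = (\<Sum>e | e \<in> E \<and> i \<in> e. \<Sum>j\<in>UNIV. if j \<in> e - {i} then ?c e else 0)"
      unfolding entry by (rule sum.swap)
    also have "\<dots> = (\<Sum>e | e \<in> E \<and> i \<in> e. real (card e - 1) * ?c e)"
    proof (intro sum.cong refl)
      fix e assume "e \<in> {e. e \<in> E \<and> i \<in> e}"
      then show "(\<Sum>j\<in>UNIV. if j \<in> e - {i} then ?c e else 0) = real (card e - 1) * ?c e"
        using sum.inter_restrict[of UNIV "\<lambda>_. ?c e" "e - {i}"] by (simp add: card_Diff_singleton)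
    qed
    also have "\<dots> = (\<Sum>e | e \<in> E \<and> i \<in> e. 1)"
      using assms(1) unfolding hypergraph_def
      by (intro sum.cong) (auto simp: of_nat_diff)
    also have "\<dots> = real k"
      using assms(2) unfolding hregular_def hdegree_def by simp
    finally show ?thesis .
  qed
  then show ?thesis
    by (simp add: vec_eq_iff matrix_vector_mult_def)
qed

section \<open>Paths and connectivity\<close>

lemma hpath_drop:
  assumes "hpath E vs es" and "p < length vs"
  shows "hpath E (drop p vs) (drop p es)"
  using assms unfolding hpath_def by (auto simp: add.assoc dest: in_set_dropD)

lemma hpath_Cons:
  assumes "hpath E vs es" and "i \<notin> set vs" and "e \<notin> set es"
    and "e \<in> E" and "i \<in> e" and "hd vs \<in> e"
  shows "hpath E (i # vs) (e # es)"
proof -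
  have "vs \<noteq> []"
    using assms(1) unfolding hpath_def by auto
  then show ?thesis
    using assms unfolding hpath_def by (auto simp: nth_Cons hd_conv_nth split: nat.split)
qed

text \<open>Prepending a vertex i that shares an edge with the start of a path: if i or the edge
  already occur on the path, shortcut there instead of extending.\<close>

lemma hpath_between_prepend:
  assumes "hpath_between E l j p" and "e \<in> E" and "i \<in> e" and "l \<in> e"
  obtains p' where "p' \<le> Suc p" "hpath_between E i j p'"
proof -
  obtain vs es where P: "hpath E vs es" "hd vs = l" "last vs = j" "length es = p"
    using assms(1) unfolding hpath_between_def by blast
  have len: "length vs = Suc p" and dist: "distinct es"
    and next_in_edge: "\<And>r. r < p \<Longrightarrow> vs ! Suc r \<in> es ! r"
    using P unfolding hpath_def by auto
  have last_drop: "last (drop r vs) = j" if "r < length vs" for r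
    using that P(3) by simp
  consider (vertex) r where "r < length vs" "vs ! r = i"
    | (edge) r where "r < p" "es ! r = e" "i \<notin> set vs"
    | (fresh) "i \<notin> set vs" "e \<notin> set es"
    using P(4) by (metis in_set_conv_nth)
  then show ?thesis
  proof cases
    case vertex
    then have "hpath_between E i j (length (drop r es))"
      unfolding hpath_between_def using hpath_drop[OF P(1)] last_drop
      by (metis hd_drop_conv_nth)
    then show ?thesis
      by (rule that[rotated]) (simp add: P(4))
  next
    case edge
    let ?vs = "drop (Suc r) vs" and ?es = "drop (Suc r) es"
    have "e \<notin> set ?es"
      using edge dist P(4) by (metis Cons_nth_drop_Suc distinct.simps(2) distinct_drop)
    moreover have "hd ?vs \<in> e"
      using edge len next_in_edge[of r] by (simp add: hd_drop_conv_nth)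
    moreover have "i \<notin> set ?vs"
      using edge(3) by (auto dest: in_set_dropD)
    moreover have "hpath E ?vs ?es"
      using edge(1) len by (intro hpath_drop[OF P(1)]) simp
    ultimately have "hpath E (i # ?vs) (e # ?es)"
      using assms(2,3) by (intro hpath_Cons)
    moreover have "last (i # ?vs) = j"
      using last_drop[of "Suc r"] edge(1) len by simp
    ultimately have "hpath_between E i j (length (e # ?es))"
      unfolding hpath_between_def by fastforce
    then show ?thesis
      by (rule that[rotated]) (simp add: P(4))
  next
    case fresh
    have "hpath E (i # vs) (e # es)"
      using fresh P assms(2-4) by (intro hpath_Cons) auto
    moreover have "last (i # vs) = j"
      using P(3) len by auto
    ultimately have "hpath_between E i j (length (e # es))"
      unfolding hpath_between_def by fastforce
    then show ?thesis
      by (rule that[rotated]) (simp add: P(4))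
  qed
qed

lemma hconnected_edge_closed:
  assumes "hconnected E" and "a \<in> S"
    and closed: "\<And>x y e. x \<in> S \<Longrightarrow> e \<in> E \<Longrightarrow> x \<in> e \<Longrightarrow> y \<in> e \<Longrightarrow> x \<noteq> y \<Longrightarrow> y \<in> S"
  shows "u \<in> S"
proof -
  obtain vs es where P: "hpath E vs es" "hd vs = a" "last vs = u"
    using assms(1) unfolding hconnected_def hpath_between_def by blast
  have len: "length vs = Suc (length es)" and "distinct vs" "set es \<subseteq> E"
    and steps: "\<And>r. r < length es \<Longrightarrow> vs ! r \<in> es ! r \<and> vs ! Suc r \<in> es ! r"
    using P(1) unfolding hpath_def by auto
  have "vs ! r \<in> S" if "r < length vs" for r
    using that
  proof (induction r)
    case 0
    then show ?case
      using P(2) \<open>a \<in> S\<close> by (simp add: hd_conv_nth)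
  next
    case (Suc r)
    have "vs ! r \<noteq> vs ! Suc r"
      using \<open>distinct vs\<close> Suc.prems by (simp add: nth_eq_iff_index_eq)
    with Suc closed[of "vs ! r" "es ! r" "vs ! Suc r"] steps[of r] \<open>set es \<subseteq> E\<close> len
    show ?case by (auto dest: nth_mem)
  qed
  moreover have "u = vs ! length es"
    using P(3) len by (metis last_conv_nth Zero_not_Suc diff_Suc_1 list.size(3))
  ultimately show ?thesis
    using len by simp
qed

lemma hadj_eigenvector_constant:
  assumes hg: "hypergraph E" and reg: "hregular E k" and con: "hconnected E"
    and eigen: "hadj E *v v = real k *\<^sub>R v"
  shows "v $ i = v $ j"
proof -
  have "Max (range (($) v)) \<in> range (($) v)"
    by (intro Max_in) auto
  then obtain a where a: "v $ a = Max (range (($) v))"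
    by (metis rangeE)
  have max: "v $ l \<le> v $ a" for l
    unfolding a by (intro Max_ge) auto
  have "u \<in> {l. v $ l = v $ a}" for u
  proof (rule hconnected_edge_closed[OF con])
    fix x y e
    assume "x \<in> {l. v $ l = v $ a}" "e \<in> E" "x \<in> e" "y \<in> e" "x \<noteq> y"
    then have "hadj E $ x $ y > 0" and x_max: "\<And>l. v $ l \<le> v $ x"
      using hadj_pos_iff[OF hg] max by auto
    then have "v $ y = v $ x"
      by (intro eigenvector_max_propagates[OF hadj_nonneg[OF hg] hadj_mult_one[OF hg reg] eigen x_max])
    then show "y \<in> {l. v $ l = v $ a}"
      using \<open>x \<in> {l. v $ l = v $ a}\<close> by simp
  qed simp
  then show ?thesis
    by (metis mem_Collect_eq)
qed

lemma hadj_power_axis_pos_hpath: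
  assumes hg: "hypergraph E" and "(((*v) (hadj E) ^^ m) (axis j 1)) $ i > 0"
  shows "\<exists>l \<le> m. hpath_between E i j l"
  using assms(2)
proof (induction m arbitrary: i)
  case 0
  then have "i = j"
    by (simp add: axis_def split: if_splits)
  moreover have "hpath E [j] []"
    unfolding hpath_def by simp
  ultimately show ?case
    unfolding hpath_between_def by fastforce
next
  case (Suc m)
  define w where "w = ((*v) (hadj E) ^^ m) (axis j 1)"
  have "0 < (hadj E *v w) $ i"
    using Suc.prems unfolding w_def by simp
  also have "\<dots> = (\<Sum>l\<in>UNIV. hadj E $ i $ l * w $ l)"
    by (simp add: matrix_vector_mult_def)
  finally obtain l where "hadj E $ i $ l * w $ l > 0"
    by (meson not_le sum_nonpos)
  moreover have "w $ l \<ge> 0"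
    unfolding w_def by (intro nonneg_matrix_power_nonneg hadj_nonneg[OF hg]) (simp add: axis_def)
  ultimately have "hadj E $ i $ l > 0" and "w $ l > 0"
    using hadj_nonneg[OF hg, of i l] by (auto simp: zero_less_mult_iff)
  then obtain e where "e \<in> E" "i \<in> e" "l \<in> e"
    using hadj_pos_iff[OF hg] by blast
  moreover obtain p where "p \<le> m" "hpath_between E l j p"
    using Suc.IH \<open>w $ l > 0\<close> unfolding w_def by blast
  ultimately obtain p' where "p' \<le> Suc p" "hpath_between E i j p'"
    using hpath_between_prepend by metis
  then show ?case
    using \<open>p \<le> m\<close> by (intro exI[of _ p']) simp
qed

lemma hdiam_le:
  assumes "\<And>u v. \<exists>l \<le> m. hpath_between E u v l"
  shows "hdiam E \<le> m"
proof -
  have "hdist E u v \<le> m" for u v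
    using assms[of u v] unfolding hdist_def by (meson Least_le le_trans)
  moreover have "{hdist E u v | u v. True} = (\<lambda>(u, v). hdist E u v) ` UNIV"
    by auto
  ultimately show ?thesis
    unfolding hdiam_def by (intro Max.boundedI) auto
qed

section \<open>The diameter bound\<close>

lemma floor_log_ratio_gap:
  fixes \<theta> k N :: real
  assumes "0 \<le> \<theta>" and "\<theta> < k" and "1 \<le> N"
  defines "d \<equiv> \<lfloor>1 + ln N / ln (k / \<theta>)\<rfloor>"
  shows "1 \<le> d" and "\<theta> ^ nat d * N < k ^ nat d"
proof -
  have "1 \<le> d \<and> \<theta> ^ nat d * N < k ^ nat d"
  proof (cases "\<theta> = 0")
    case True
    \<comment> \<open>the junk values x / 0 = 0 and ln 0 = 0 give d = 1\<close>
    then show ?thesis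
      using \<open>\<theta> < k\<close> unfolding d_def by simp
  next
    case False
    then have "\<theta> > 0" and "k > 0"
      using assms(1,2) by auto
    define x where "x = ln N / ln (k / \<theta>)"
    have L_pos: "ln (k / \<theta>) > 0"
      using \<open>\<theta> > 0\<close> \<open>\<theta> < k\<close> by simp
    then have "x \<ge> 0"
      unfolding x_def using \<open>1 \<le> N\<close> by simp
    then have "1 \<le> d" and "real (nat d) > x"
      unfolding d_def x_def[symmetric] by linarith+
    then have "ln N < real (nat d) * ln (k / \<theta>)"
      using L_pos unfolding x_def by (simp add: divide_less_eq)
    also have "\<dots> = ln ((k / \<theta>) ^ nat d)"
      using \<open>\<theta> > 0\<close> \<open>k > 0\<close> by (simp add: ln_realpow)
    finally have "N < (k / \<theta>) ^ nat d"
      using \<open>1 \<le> N\<close> \<open>\<theta> > 0\<close> \<open>k > 0\<close> by (simp add: ln_less_cancel_iff)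
    then show ?thesis
      using \<open>1 \<le> d\<close> \<open>\<theta> > 0\<close> by (simp add: power_divide field_simps)
  qed
  then show "1 \<le> d" and "\<theta> ^ nat d * N < k ^ nat d"
    by auto
qed

lemma hadj_eigenvalue_le_orthogonal_one:
  fixes E :: "'n::finite set set"
  assumes hg: "hypergraph E" and reg: "hregular E k" and con: "hconnected E"
    and ed: "eigenvalues_desc (hadj E) lam"
    and bound: "\<And>l. 1 \<le> l \<Longrightarrow> l < CARD('n) \<Longrightarrow> \<bar>lam ! l\<bar> \<le> \<theta>" and "\<theta> < real k"
    and "v \<noteq> 0" and "1 \<bullet> v = 0" and eigen: "hadj E *v v = s *\<^sub>R v"
  shows "\<bar>s\<bar> \<le> \<theta>"
proof -
  obtain l where "l < CARD('n)" "lam ! l = s"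
    using eigenvalue_in_eigenvalues_desc[OF ed eigen \<open>v \<noteq> 0\<close>] .
  obtain q where "q < CARD('n)" "lam ! q = real k"
    using eigenvalue_in_eigenvalues_desc[OF ed hadj_mult_one[OF hg reg]] by (auto simp: vec_eq_iff)
  \<comment> \<open>k is the top eigenvalue, so an eigenvector orthogonal to 1 with eigenvalue lam ! 0
    would be a constant vector orthogonal to 1\<close>
  have "q = 0"
  proof (rule ccontr)
    assume "q \<noteq> 0"
    then have "\<bar>lam ! q\<bar> \<le> \<theta>"
      using bound \<open>q < CARD('n)\<close> by simp
    then show False
      using \<open>lam ! q = real k\<close> \<open>\<theta> < real k\<close> by simp
  qed
  show ?thesis
  proof (cases "l = 0")
    case True
    then have "hadj E *v v = real k *\<^sub>R v"
      using eigen \<open>lam ! l = s\<close> \<open>lam ! q = real k\<close> \<open>q = 0\<close> by simp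
    then have "v = v $ i *\<^sub>R 1" for i
      using hadj_eigenvector_constant[OF hg reg con] by (auto simp: vec_eq_iff)
    then have "v $ i * CARD('n) = 0" for i
      using \<open>1 \<bullet> v = 0\<close> by (metis inner_scaleR_right inner_one_one)
    then have "v $ i = 0" for i
      by simp
    then show ?thesis
      using \<open>v \<noteq> 0\<close> by (simp add: vec_eq_iff)
  next
    case False
    then show ?thesis
      using bound[of l] \<open>l < CARD('n)\<close> \<open>lam ! l = s\<close> by simp
  qed
qed

theorem corollary1:
  fixes E :: "'n::finite set set" and k :: nat and lam :: "real list" and \<theta> :: real
  assumes "hypergraph E" and "hregular E k" and "hconnected E"
    and "CARD('n) \<ge> 2"
    and "eigenvalues_desc (hadj E) lam"
    and "\<theta> = Max ((\<lambda>l. \<bar>lam ! l\<bar>) ` {1..<CARD('n)})"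
    and "\<theta> < real k"
  shows "int (hdiam E) \<le> \<lfloor>1 + ln (real (CARD('n)) - 1) / ln (real k / \<theta>)\<rfloor>"
proof -
  have bound: "\<bar>lam ! l\<bar> \<le> \<theta>" if "1 \<le> l" "l < CARD('n)" for l
    unfolding assms(6) using that by (intro Max_ge) auto
  have "\<bar>lam ! 1\<bar> \<le> \<theta>"
    using assms(4) by (intro bound) auto
  then have "\<theta> \<ge> 0"
    by (meson abs_ge_zero order_trans)
  define d where "d = \<lfloor>1 + ln (real (CARD('n)) - 1) / ln (real k / \<theta>)\<rfloor>"
  have "1 \<le> d" and gap: "\<theta> ^ nat d * (real CARD('n) - 1) < real k ^ nat d"
    using floor_log_ratio_gap[of \<theta> "real k" "real CARD('n) - 1"] \<open>\<theta> \<ge> 0\<close> assms(4,7)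
    unfolding d_def by auto
  have "\<exists>l \<le> nat d. hpath_between E u v l" for u v
  proof (rule hadj_power_axis_pos_hpath[OF assms(1)])
    show "(((*v) (hadj E) ^^ nat d) (axis v 1)) $ u > 0"
      using hadj_eigenvalue_le_orthogonal_one[OF assms(1-3,5) bound assms(7)]
      by (intro symmetric_matrix_power_axis_pos[OF hadj_transpose hadj_mult_one[OF assms(1,2)]
            \<open>\<theta> \<ge> 0\<close> _ gap]) auto
  qed
  then have "hdiam E \<le> nat d"
    by (rule hdiam_le)
  then show ?thesis
    using \<open>1 \<le> d\<close> unfolding d_def by linarith
qed

end
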